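(* There are no rational numbers (in particular, no integers) $x_1,x_2,x_3,d_1,d_2,d_3,L$ such that $\operatorname{rank}N\le 2$, $\operatorname{rank}N_1=2$, $\operatorname{rank}N_2=1$, and $\tilde p_2=\tilde p_3=\dots=\tilde p_8=0$. Likewise there are no such rational numbers with $\operatorname{rank}N\le 2$, $\operatorname{rank}N_1=2$, $\operatorname{rank}N_2=1$ satisfying $p_1=p_2=p_3=0$.
   Context: Define $p_1=x_2^2+x_3^2-d_1^2$, $p_2=x_3^2+x_1^2-d_2^2$, $p_3=x_1^2+x_2^2-d_3^2$, and $\tilde p_2=p_1+p_2+p_3$, $\tilde p_3=d_1p_1+d_2p_2+d_3p_3$, $\tilde p_4=x_1p_1+x_2p_2+x_3p_3$, $\tilde p_5=x_1d_1p_1+x_2d_2p_2+x_3d_3p_3$, $\tilde p_6=x_1^2p_1+x_2^2p_2+x_3^2p_3$, $\tilde p_7=d_1^2p_1+d_2^2p_2+d_3^2p_3$, $\tilde p_8=x_1^2d_1^2p_1+x_2^2d_2^2p_2+x_3^2d_3^2p_3$. $N$ is the $3\times 7$ matrix whose $i$-th row is $(1,\ d_i,\ x_i,\ x_id_i,\ x_i^2,\ d_i^2,\ x_i^2d_i^2)$; $N_1$ is the $3\times 2$ matrix with rows $(1,d_i)$; $N_2$ is the $3\times 2$ matrix with rows $(1,x_i)$, $i=1,2,3$. Ranks are over $\mathbb{Q}$. *)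

theory Defs
  imports "Jordan_Normal_Form.DL_Rank"
begin

text \<open>Rank of a matrix over the field of rationals (column rank, which equals row rank),
  using the Jordan_Normal_Form notion; the argument 3 is the number of rows.\<close>

definition rank3 :: "rat mat \<Rightarrow> nat" where
  "rank3 A = vec_space.rank 3 A"

definition matN :: "rat \<Rightarrow> rat \<Rightarrow> rat \<Rightarrow> rat \<Rightarrow> rat \<Rightarrow> rat \<Rightarrow> rat mat" where
  "matN x1 x2 x3 d1 d2 d3 = mat_of_rows_list 7
     [[1, d1, x1, x1*d1, x1^2, d1^2, x1^2*d1^2],
      [1, d2, x2, x2*d2, x2^2, d2^2, x2^2*d2^2],
      [1, d3, x3, x3*d3, x3^2, d3^2, x3^2*d3^2]]"

definition matN1 :: "rat \<Rightarrow> rat \<Rightarrow> rat \<Rightarrow> rat mat" where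
  "matN1 d1 d2 d3 = mat_of_rows_list 2 [[1, d1], [1, d2], [1, d3]]"

definition matN2 :: "rat \<Rightarrow> rat \<Rightarrow> rat \<Rightarrow> rat mat" where
  "matN2 x1 x2 x3 = mat_of_rows_list 2 [[1, x1], [1, x2], [1, x3]]"

definition p1 :: "rat \<Rightarrow> rat \<Rightarrow> rat \<Rightarrow> rat \<Rightarrow> rat \<Rightarrow> rat \<Rightarrow> rat" where
  "p1 x1 x2 x3 d1 d2 d3 = x2^2 + x3^2 - d1^2"
definition p2 :: "rat \<Rightarrow> rat \<Rightarrow> rat \<Rightarrow> rat \<Rightarrow> rat \<Rightarrow> rat \<Rightarrow> rat" where
  "p2 x1 x2 x3 d1 d2 d3 = x3^2 + x1^2 - d2^2"
definition p3 :: "rat \<Rightarrow> rat \<Rightarrow> rat \<Rightarrow> rat \<Rightarrow> rat \<Rightarrow> rat \<Rightarrow> rat" where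
  "p3 x1 x2 x3 d1 d2 d3 = x1^2 + x2^2 - d3^2"

text \<open>The combinations tilde p_2, ..., tilde p_8: the k-th one is
  \<open>w1 * p1 + w2 * p2 + w3 * p3\<close> with weights \<open>w_i\<close> given by
  1, d_i, x_i, x_i d_i, x_i^2, d_i^2, x_i^2 d_i^2 respectively.\<close>

definition ptilde :: "(rat \<Rightarrow> rat \<Rightarrow> rat) \<Rightarrow> rat \<Rightarrow> rat \<Rightarrow> rat \<Rightarrow> rat \<Rightarrow> rat \<Rightarrow> rat \<Rightarrow> rat" where
  "ptilde w x1 x2 x3 d1 d2 d3 =
     w x1 d1 * p1 x1 x2 x3 d1 d2 d3 + w x2 d2 * p2 x1 x2 x3 d1 d2 d3 + w x3 d3 * p3 x1 x2 x3 d1 d2 d3"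

definition weights :: "(rat \<Rightarrow> rat \<Rightarrow> rat) list" where
  "weights = [(\<lambda>x d. 1), (\<lambda>x d. d), (\<lambda>x d. x), (\<lambda>x d. x * d),
              (\<lambda>x d. x^2), (\<lambda>x d. d^2), (\<lambda>x d. x^2 * d^2)]"

end

theory Submission
  imports Defs
begin

(* A 3x2 matrix with rows (1, a_i) has rank 2 exactly when the a_i are not all
   equal.  Hence rank N_2 = 1 forces x_1 = x_2 = x_3 =: x, and rank N_1 = 2 says that the d_i
   are not all equal.  With equal x_i every p_i has
   the form f(d_i) for f(d) = 2x^2 - d^2.  The three combinations tilde p_2, tilde p_3 and
   tilde p_7 (weights 1, d_i, d_i^2) form a Vandermonde system in the values f(d_i), and a
   Vandermonde argument shows that all f(d_i) vanish as soon as the d_i are not all equal.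
   So both alternatives of the theorem reduce to d_i^2 = 2x^2 for i = 1, 2, 3, which by the
   irrationality of sqrt 2 forces x = d_1 = d_2 = d_3 = 0, contradicting rank N_1 = 2. *)

definition two_col_mat :: "'a::field \<Rightarrow> 'a \<Rightarrow> 'a \<Rightarrow> 'a mat" where
  "two_col_mat a1 a2 a3 = mat_of_rows_list 2 [[1, a1], [1, a2], [1, a3]]"

lemma matN1_two_col: "matN1 d1 d2 d3 = two_col_mat d1 d2 d3"
  and matN2_two_col: "matN2 x1 x2 x3 = two_col_mat x1 x2 x3"
  by (simp_all add: matN1_def matN2_def two_col_mat_def)

lemma two_col_mat_carrier: "two_col_mat a1 a2 a3 \<in> carrier_mat 3 2"
  by (rule carrier_matI) (simp_all add: two_col_mat_def mat_of_rows_list_def numeral_3_eq_3)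

lemma two_col_mat_index:
  assumes "i < 3" "j < 2"
  shows "two_col_mat a1 a2 a3 $$ (i, j) = (if j = 0 then 1 else [a1, a2, a3] ! i)"
proof -
  have "i = 0 \<or> i = 1 \<or> i = 2" and "j = 0 \<or> j = 1" using assms by linarith+
  then show ?thesis
    by (auto simp: two_col_mat_def mat_of_rows_list_def numeral_3_eq_3)
qed

lemma two_col_mat_mult_vec:
  assumes "v \<in> carrier_vec 2" "i < 3"
  shows "(two_col_mat a1 a2 a3 *\<^sub>v v) $ i = v $ 0 + [a1, a2, a3] ! i * v $ 1"
  using assms two_col_mat_carrier[of a1 a2 a3]
  by (auto simp: scalar_prod_def numeral_2_eq_2 two_col_mat_index)

lemma two_col_mat_kernel:
  assumes distinct: "\<not> (a1 = a2 \<and> a2 = a3)"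
    and v: "v \<in> carrier_vec 2" and ker: "two_col_mat a1 a2 a3 *\<^sub>v v = 0\<^sub>v 3"
  shows "v = 0\<^sub>v 2"
proof -
  have row: "v $ 0 + [a1, a2, a3] ! i * v $ 1 = 0" if "i < 3" for i
    using two_col_mat_mult_vec[OF v that, of a1 a2 a3] ker that by simp
  have eqs: "v $ 0 + a1 * v $ 1 = 0" "v $ 0 + a2 * v $ 1 = 0" "v $ 0 + a3 * v $ 1 = 0"
    using row[of 0] row[of 1] row[of 2] by simp_all
  have "v $ 1 = 0"
  proof (rule ccontr)
    assume "v $ 1 \<noteq> 0"
    moreover have "a1 * v $ 1 = - v $ 0" "a2 * v $ 1 = - v $ 0" "a3 * v $ 1 = - v $ 0"
      using eqs by (simp_all add: add_eq_0_iff)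
    ultimately have "a1 = a2" "a2 = a3" by (metis mult_right_cancel)+
    with distinct show False by simp
  qed
  moreover from this have "v $ 0 = 0" using eqs by simp
  ultimately show ?thesis
    using v by (intro eq_vecI) (auto simp: less_2_cases_iff)
qed

text \<open>Rank 2 is attained exactly when the second column is not constant; otherwise the matrix is
  a product of a column and a row, hence of rank at most 1.\<close>

lemma rank_two_col_mat_eq_2:
  "vec_space.rank 3 (two_col_mat a1 a2 a3) = 2 \<longleftrightarrow> \<not> (a1 = a2 \<and> a2 = a3)"
proof
  assume rank: "vec_space.rank 3 (two_col_mat a1 a2 a3) = 2"
  show "\<not> (a1 = a2 \<and> a2 = a3)"
  proof
    assume "a1 = a2 \<and> a2 = a3"
    then have entries: "two_col_mat a1 a2 a3 $$ (r, c) = 1 * (if c = 0 then 1 else a1)"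
      if "r < dim_row (two_col_mat a1 a2 a3)" "c < dim_col (two_col_mat a1 a2 a3)" for r c
      using that two_col_mat_carrier[of a1 a2 a3]
      by (auto simp: two_col_mat_index less_Suc_eq numeral_3_eq_3)
    have "vec_space.rank 3 (two_col_mat a1 a2 a3) \<le> 1"
      by (rule vec_space.rank_le_1_product_entries[OF two_col_mat_carrier entries])
    with rank show False by simp
  qed
next
  assume distinct: "\<not> (a1 = a2 \<and> a2 = a3)"
  let ?A = "two_col_mat a1 a2 a3"
  have car: "?A \<in> carrier_mat 3 2" by (rule two_col_mat_carrier)
  have cols: "cols ?A = [col ?A 0, col ?A 1]"
    using car by (simp add: cols_def numeral_2_eq_2 upt_conv_Cons)
  have "col ?A 0 \<noteq> col ?A 1"
  proof
    assume col_eq: "col ?A 0 = col ?A 1"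
    have entry_eq: "?A $$ (i, 0) = ?A $$ (i, 1)" if "i < 3" for i
      using that car arg_cong[OF col_eq, of "\<lambda>c. c $ i"] by simp
    then have "a1 = 1" "a2 = 1" "a3 = 1"
      using entry_eq[of 0] entry_eq[of 1] entry_eq[of 2] by (simp_all add: two_col_mat_index)
    with distinct show False by simp
  qed
  then have dist: "distinct (cols ?A)" using cols by simp
  have "\<not> module.lin_dep class_ring (module_vec TYPE('a) 3) (set (cols ?A))"
    using vec_space.lin_depE[OF car _ dist] two_col_mat_kernel[OF distinct] by metis
  then show "vec_space.rank 3 ?A = 2"
    using vec_space.lin_indpt_full_rank[OF car dist] by blast
qed

text \<open>The Vandermonde identity: combining the three moment equations with the coefficients of
  \<open>(t - d\<^sub>2)(t - d\<^sub>3)\<close> isolates the first unknown.\<close>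

lemma vandermonde3_separated:
  fixes f :: "'a::field \<Rightarrow> 'a"
  assumes "f d1 + f d2 + f d3 = 0"
    and "d1 * f d1 + d2 * f d2 + d3 * f d3 = 0"
    and "d1^2 * f d1 + d2^2 * f d2 + d3^2 * f d3 = 0"
  shows "f d1 * (d1 - d2) * (d1 - d3) = 0"
proof -
  have "f d1 * (d1 - d2) * (d1 - d3) =
      (d1^2 * f d1 + d2^2 * f d2 + d3^2 * f d3) - (d2 + d3) * (d1 * f d1 + d2 * f d2 + d3 * f d3)
      + d2 * d3 * (f d1 + f d2 + f d3)"
    by (simp add: algebra_simps power2_eq_square)
  then show ?thesis using assms by simp
qed

text \<open>Equal nodes carry equal values, which is what makes the degenerate cases work
  (characteristic 0 is used to cancel the factor 2).\<close>

lemma vandermonde3_vanish: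
  fixes f :: "'a::field_char_0 \<Rightarrow> 'a"
  assumes distinct: "\<not> (d1 = d2 \<and> d2 = d3)"
    and S0: "f d1 + f d2 + f d3 = 0"
    and S1: "d1 * f d1 + d2 * f d2 + d3 * f d3 = 0"
    and S2: "d1^2 * f d1 + d2^2 * f d2 + d3^2 * f d3 = 0"
  shows "f d1 = 0 \<and> f d2 = 0 \<and> f d3 = 0"
proof -
  have P1: "f d1 * (d1 - d2) * (d1 - d3) = 0"
    using vandermonde3_separated[OF S0 S1 S2] .
  have P2: "f d2 * (d2 - d1) * (d2 - d3) = 0"
    using S0 S1 S2 vandermonde3_separated[of f d2 d1 d3] by (simp add: ac_simps)
  have P3: "f d3 * (d3 - d1) * (d3 - d2) = 0"
    using S0 S1 S2 vandermonde3_separated[of f d3 d1 d2] by (simp add: ac_simps)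
  show ?thesis
    using distinct S0 P1 P2 P3
    by (cases "d1 = d2"; cases "d1 = d3"; cases "d2 = d3") auto
qed

lemma rat_sq_eq_double_sq:
  fixes d x :: rat
  assumes "d^2 = 2 * x^2"
  shows "x = 0 \<and> d = 0"
proof -
  have "x = 0"
  proof (rule ccontr)
    assume "x \<noteq> 0"
    obtain a b where q: "quotient_of (d / x) = (a, b)" by (cases "quotient_of (d / x)")
    have b: "b > 0" and coprime: "coprime a b" and ab: "d / x = of_int a / of_int b"
      using quotient_of_denom_pos[OF q] quotient_of_coprime[OF q] quotient_of_div[OF q] by auto
    have "(of_int a / of_int b :: rat)^2 = 2"
      using assms \<open>x \<noteq> 0\<close> by (simp flip: ab add: power_divide)
    then have "(of_int (a^2) :: rat) = of_int (2 * b^2)"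
      using b by (simp add: power_divide field_simps)
    then have a_sq: "a^2 = 2 * b^2" by (simp only: of_int_eq_iff)
    then have "even a" by (metis dvd_triv_left even_power)
    then obtain k where "a = 2 * k" by blast
    with a_sq have "b^2 = 2 * k^2" by (simp add: power_mult_distrib)
    then have "even b" by (metis dvd_triv_left even_power)
    with \<open>even a\<close> coprime show False using coprime_common_divisor[of a b 2] by auto
  qed
  with assms show ?thesis by simp
qed

lemma double_sq_minus_sq_not_all_zero:
  fixes x d1 d2 d3 :: rat
  assumes "\<not> (d1 = d2 \<and> d2 = d3)"
  shows "\<not> (2 * x^2 - d1^2 = 0 \<and> 2 * x^2 - d2^2 = 0 \<and> 2 * x^2 - d3^2 = 0)"
  using assms rat_sq_eq_double_sq[of d1 x] rat_sq_eq_double_sq[of d2 x] rat_sq_eq_double_sq[of d3 x]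
  by auto

text \<open>The rank conditions on \<open>N\<^sub>1\<close> and \<open>N\<^sub>2\<close> make all \<open>p\<^sub>i\<close>
  values of \<open>f(d) = 2 x\<^sup>2 - d\<^sup>2\<close> at non-constant nodes.\<close>

theorem theorem4p1:
  fixes x1 x2 x3 d1 d2 d3 L :: rat
  assumes "rank3 (matN x1 x2 x3 d1 d2 d3) \<le> 2"
    and "rank3 (matN1 d1 d2 d3) = 2"
    and "rank3 (matN2 x1 x2 x3) = 1"
  shows "\<not> (\<forall>w \<in> set weights. ptilde w x1 x2 x3 d1 d2 d3 = 0) \<and>
         \<not> (p1 x1 x2 x3 d1 d2 d3 = 0 \<and> p2 x1 x2 x3 d1 d2 d3 = 0 \<and> p3 x1 x2 x3 d1 d2 d3 = 0)"
proof -
  have x_eq: "x1 = x2 \<and> x2 = x3"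
    using assms(3) rank_two_col_mat_eq_2[of x1 x2 x3] by (auto simp: rank3_def matN2_two_col)
  have d_distinct: "\<not> (d1 = d2 \<and> d2 = d3)"
    using assms(2) rank_two_col_mat_eq_2[of d1 d2 d3] by (simp add: rank3_def matN1_two_col)
  define f where "f d = 2 * x1^2 - d^2" for d
  have p_eq: "p1 x1 x2 x3 d1 d2 d3 = f d1" "p2 x1 x2 x3 d1 d2 d3 = f d2" "p3 x1 x2 x3 d1 d2 d3 = f d3"
    using x_eq by (auto simp: p1_def p2_def p3_def f_def)
  have "\<not> (f d1 = 0 \<and> f d2 = 0 \<and> f d3 = 0)"
    using double_sq_minus_sq_not_all_zero[OF d_distinct, of x1] by (simp add: f_def)
  moreover have "f d1 = 0 \<and> f d2 = 0 \<and> f d3 = 0"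
    if "\<forall>w \<in> set weights. ptilde w x1 x2 x3 d1 d2 d3 = 0"
  proof (rule vandermonde3_vanish[OF d_distinct])
    have "ptilde (\<lambda>x d. 1) x1 x2 x3 d1 d2 d3 = 0" "ptilde (\<lambda>x d. d) x1 x2 x3 d1 d2 d3 = 0"
      "ptilde (\<lambda>x d. d^2) x1 x2 x3 d1 d2 d3 = 0"
      using that by (auto simp: weights_def)
    then show "f d1 + f d2 + f d3 = 0" "d1 * f d1 + d2 * f d2 + d3 * f d3 = 0"
      "d1^2 * f d1 + d2^2 * f d2 + d3^2 * f d3 = 0"
      by (simp_all add: ptilde_def p_eq)
  qed
  ultimately show ?thesis using p_eq by auto
qed

end
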